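(* In the setting of the context, the boundary maps satisfy $\Gamma^1C=V_C\Gamma^2$ and $\Gamma^2C=V_C\Gamma^1$ on $\widetilde H^1(\mathbf G;\mathbb C^2)$. Moreover, for $z\in\rho(D^0)\setminus\{m\}$, $$Q(-\overline z)=V_C\,Q(z)^{-1}\,V_C.$$
   Context: Let $m\ge0$. A finite oriented metric graph $\mathbf G$ has a finite nonempty vertex set, finite sets $\mathcal I$ (internal) and $\mathcal E$ (external) of edges, $\mathcal J=\mathcal I\cup\mathcal E\ne\emptyset$, no loops. Each internal edge $i$ is identified with $I_i=(a_i,b_i)$, $a_i$ and $b_i$ corresponding to its initial and terminal vertex. An external edge $e$ is identified with $(a_e,+\infty)$ ($\rho(e)=-1$) or $(-\infty,b_e)$ ($\rho(e)=1$), with finite endpoint $\partial e$. $\mathscr H=\bigoplus_jL^2(I_j;\mathbb C^2)$, $\widetilde H^1(\mathbf G;\mathbb C^2)=\bigoplus_jH^1(I_j;\mathbb C^2)$, $\Phi=(\phi_j)_j$, $\phi_j=(\phi_j^1,\phi_j^2)^T$. $D^{max}$ acts edgewise by $-i\sigma_1\phi_j'+m\sigma_3\phi_j$ ($\sigma_1=\begin{pmatrix}0&1\\1&0\end{pmatrix}$, $\sigma_3=\operatorname{diag}(1,-1)$). $\mathcal G=\bigoplus_j\mathcal G_j$, $\mathcal G_i=\mathbb C^2$, $\mathcal G_e=\mathbb C$; $\Gamma^k=\bigoplus_j\Gamma^k_j$, $\Gamma^1_i\Phi=(\phi_i^1(a_i),\phi_i^1(b_i))^T$, $\Gamma^2_i\Phi=(i\phi_i^2(a_i),-i\phi_i^2(b_i))^T$,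 $\Gamma^1_e\Phi=\phi_e^1(\partial e)$, $\Gamma^2_e\Phi=-i\rho(e)\phi^2_e(\partial e)$; $(\Gamma^1,\Gamma^2,\mathcal G)$ is a boundary triple for $D^{max}$, $D^0=D^{max}\upharpoonright\ker\Gamma^1$, and for $z\in\rho(D^0)$, $\gamma(z)=(\Gamma^1\upharpoonright\ker(D^{max}-z))^{-1}$ and $Q(z)=\Gamma^2\gamma(z)$. The charge conjugation is the antilinear map $C\Phi=(\sigma_1\overline{\phi_j})_j$. $V_C=\bigoplus_jV_{C,j}$ is the antilinear map on $\mathcal G$ with $V_{C,j}\omega_j=i\sigma_3\overline{\omega_j}$ for $j\in\mathcal I$ and $V_{C,j}\omega_j=-i\rho(j)\overline{\omega_j}$ for $j\in\mathcal E$. *)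

theory Defs
  imports "HOL-Analysis.Analysis"
begin

text \<open>External edge e is (lft e, +inf) if orient e = -1 and (-inf, rgt e)
  if orient e = 1. Functions on the graph: 'j => real => complex * complex
  (value outside the edge intervals is irrelevant).\<close>

record 'j mgraph =
  iedges :: "'j set"
  eedges :: "'j set"
  lft :: "'j \<Rightarrow> real"
  rgt :: "'j \<Rightarrow> real"
  orient :: "'j \<Rightarrow> real"

definition valid_graph :: "'j mgraph \<Rightarrow> bool" where
  "valid_graph G \<longleftrightarrow> finite (iedges G) \<and> finite (eedges G) \<and>
     iedges G \<inter> eedges G = {} \<and> iedges G \<union> eedges G \<noteq> {} \<and>
     (\<forall>i\<in>iedges G. lft G i < rgt G i) \<and> (\<forall>e\<in>eedges G. orient G e \<in> {-1, 1})"

definition edges :: "'j mgraph \<Rightarrow> 'j set" where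
  "edges G = iedges G \<union> eedges G"

definition edge_int :: "'j mgraph \<Rightarrow> 'j \<Rightarrow> real set" where
  "edge_int G j = (if j \<in> iedges G then {lft G j<..<rgt G j}
     else if orient G j = -1 then {lft G j<..} else {..<rgt G j})"

definition bdpt :: "'j mgraph \<Rightarrow> 'j \<Rightarrow> real" where
  "bdpt G e = (if orient G e = -1 then lft G e else rgt G e)"

definition L2_on :: "real set \<Rightarrow> (real \<Rightarrow> complex) \<Rightarrow> bool" where
  "L2_on S h \<longleftrightarrow> set_borel_measurable lborel S h \<and>
     set_integrable lborel S (\<lambda>x. (cmod (h x))\<^sup>2)"

definition weak_deriv_on :: "real set \<Rightarrow> (real \<Rightarrow> complex) \<Rightarrow> (real \<Rightarrow> complex) \<Rightarrow> bool" where
  "weak_deriv_on S g h \<longleftrightarrow> (\<forall>x\<in>S. \<forall>y\<in>S. x \<le> y \<longrightarrow>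
     set_integrable lborel {x..y} h \<and> g y - g x = (LINT t:{x..y}|lborel. h t))"

text \<open>H^1 on an interval, via its continuous representative (continuous up to the endpoints)\<close>
definition H1_on :: "real set \<Rightarrow> (real \<Rightarrow> complex) \<Rightarrow> bool" where
  "H1_on S g \<longleftrightarrow> continuous_on (closure S) g \<and> L2_on S g \<and>
     (\<exists>h. L2_on S h \<and> weak_deriv_on S g h)"

definition H1 :: "'j mgraph \<Rightarrow> ('j \<Rightarrow> real \<Rightarrow> complex \<times> complex) \<Rightarrow> bool" where
  "H1 G \<Phi> \<longleftrightarrow> (\<forall>j\<in>edges G. H1_on (edge_int G j) (\<lambda>x. fst (\<Phi> j x)) \<and>
                                H1_on (edge_int G j) (\<lambda>x. snd (\<Phi> j x)))"

definition L2H :: "'j mgraph \<Rightarrow> ('j \<Rightarrow> real \<Rightarrow> complex \<times> complex) \<Rightarrow> bool" where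
  "L2H G \<Phi> \<longleftrightarrow> (\<forall>j\<in>edges G. L2_on (edge_int G j) (\<lambda>x. fst (\<Phi> j x)) \<and>
                                L2_on (edge_int G j) (\<lambda>x. snd (\<Phi> j x)))"

definition normH :: "'j mgraph \<Rightarrow> ('j \<Rightarrow> real \<Rightarrow> complex \<times> complex) \<Rightarrow> real" where
  "normH G \<Phi> = sqrt (\<Sum>j\<in>edges G. LINT x:edge_int G j|lborel.
                         (cmod (fst (\<Phi> j x)))\<^sup>2 + (cmod (snd (\<Phi> j x)))\<^sup>2)"

definition psc :: "complex \<Rightarrow> complex \<times> complex \<Rightarrow> complex \<times> complex" where
  "psc z p = (z * fst p, z * snd p)"

text \<open>Graph of D^max: D^max Phi = Psi, edgewise -i sigma_1 Phi' + m sigma_3 Phi\<close>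
definition Dmax_rel :: "'j mgraph \<Rightarrow> real \<Rightarrow> ('j \<Rightarrow> real \<Rightarrow> complex \<times> complex)
     \<Rightarrow> ('j \<Rightarrow> real \<Rightarrow> complex \<times> complex) \<Rightarrow> bool" where
  "Dmax_rel G m \<Phi> \<Psi> \<longleftrightarrow> H1 G \<Phi> \<and> L2H G \<Psi> \<and>
     (\<forall>j\<in>edges G. \<exists>h1 h2.
        L2_on (edge_int G j) h1 \<and> L2_on (edge_int G j) h2 \<and>
        weak_deriv_on (edge_int G j) (\<lambda>x. fst (\<Phi> j x)) h1 \<and>
        weak_deriv_on (edge_int G j) (\<lambda>x. snd (\<Phi> j x)) h2 \<and>
        (AE x in lborel. x \<in> edge_int G j \<longrightarrow>
           \<Psi> j x = (- \<i> * h2 x + complex_of_real m * fst (\<Phi> j x),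
                    - \<i> * h1 x - complex_of_real m * snd (\<Phi> j x))))"

definition bspace :: "'j mgraph \<Rightarrow> ('j \<Rightarrow> complex \<times> complex) set" where
  "bspace G = {\<omega>. \<forall>j. (j \<notin> edges G \<longrightarrow> \<omega> j = (0, 0)) \<and> (j \<in> eedges G \<longrightarrow> snd (\<omega> j) = 0)}"

definition Gamma1 :: "'j mgraph \<Rightarrow> ('j \<Rightarrow> real \<Rightarrow> complex \<times> complex) \<Rightarrow> 'j \<Rightarrow> complex \<times> complex" where
  "Gamma1 G \<Phi> j = (if j \<in> iedges G then (fst (\<Phi> j (lft G j)), fst (\<Phi> j (rgt G j)))
     else if j \<in> eedges G then (fst (\<Phi> j (bdpt G j)), 0) else (0, 0))"

definition Gamma2 :: "'j mgraph \<Rightarrow> ('j \<Rightarrow> real \<Rightarrow> complex \<times> complex) \<Rightarrow> 'j \<Rightarrow> complex \<times> complex" where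
  "Gamma2 G \<Phi> j = (if j \<in> iedges G then (\<i> * snd (\<Phi> j (lft G j)), - \<i> * snd (\<Phi> j (rgt G j)))
     else if j \<in> eedges G then (- \<i> * complex_of_real (orient G j) * snd (\<Phi> j (bdpt G j)), 0)
     else (0, 0))"

definition VC :: "'j mgraph \<Rightarrow> ('j \<Rightarrow> complex \<times> complex) \<Rightarrow> 'j \<Rightarrow> complex \<times> complex" where
  "VC G \<omega> j = (if j \<in> iedges G then (\<i> * cnj (fst (\<omega> j)), - \<i> * cnj (snd (\<omega> j)))
     else if j \<in> eedges G then (- \<i> * complex_of_real (orient G j) * cnj (fst (\<omega> j)), 0)
     else (0, 0))"

definition chargeC :: "('j \<Rightarrow> real \<Rightarrow> complex \<times> complex) \<Rightarrow> 'j \<Rightarrow> real \<Rightarrow> complex \<times> complex" where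
  "chargeC \<Phi> j x = (cnj (snd (\<Phi> j x)), cnj (fst (\<Phi> j x)))"

definition D0_rel :: "'j mgraph \<Rightarrow> real \<Rightarrow> ('j \<Rightarrow> real \<Rightarrow> complex \<times> complex)
     \<Rightarrow> ('j \<Rightarrow> real \<Rightarrow> complex \<times> complex) \<Rightarrow> bool" where
  "D0_rel G m \<Phi> \<Psi> \<longleftrightarrow> Dmax_rel G m \<Phi> \<Psi> \<and> Gamma1 G \<Phi> = (\<lambda>j. (0, 0))"

definition resolvent_D0 :: "'j mgraph \<Rightarrow> real \<Rightarrow> complex set" where
  "resolvent_D0 G m = {z.
     (\<forall>\<Psi>. L2H G \<Psi> \<longrightarrow> (\<exists>\<Phi>. D0_rel G m \<Phi> (\<lambda>j x. \<Psi> j x + psc z (\<Phi> j x)))) \<and>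
     (\<exists>c. \<forall>\<Phi> \<Psi>. L2H G \<Psi> \<and> D0_rel G m \<Phi> (\<lambda>j x. \<Psi> j x + psc z (\<Phi> j x))
                 \<longrightarrow> normH G \<Phi> \<le> c * normH G \<Psi>)}"

text \<open>Weyl function Q(z) = Gamma2 gamma(z), gamma(z) = (Gamma1 restricted to ker(D^max - z))^-1\<close>
definition Qfun :: "'j mgraph \<Rightarrow> real \<Rightarrow> complex \<Rightarrow> ('j \<Rightarrow> complex \<times> complex) \<Rightarrow> 'j \<Rightarrow> complex \<times> complex" where
  "Qfun G m z \<omega> = (THE \<eta>. \<exists>\<Phi>. Dmax_rel G m \<Phi> (\<lambda>j x. psc z (\<Phi> j x)) \<and>
                              Gamma1 G \<Phi> = \<omega> \<and> Gamma2 G \<Phi> = \<eta>)"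

end

theory Submission
  imports Defs
begin

text \<open>
  Charge conjugation anticommutes with the Dirac expression, so C maps ker (D_max - z) onto
  ker (D_max + cnj z), and the boundary identities Gamma1 C = V_C Gamma2 and Gamma2 C = V_C Gamma1
  are pointwise computations. Hence Q(-cnj z) V_C Q(z) = V_C on the boundary space and, with the
  roles of z and -cnj z exchanged, Q(z) V_C Q(-cnj z) = V_C; since V_C is an involution, Q(z) is
  bijective with inverse V_C Q(-cnj z) V_C.

  It remains to see that -cnj z lies in the resolvent set of D_0. With w = -cnj z and
  beta = (w - m) / (w + m), the map (phi1, phi2) |-> (cnj phi1, beta cnj phi2) preserves
  Gamma1 Phi = 0 and turns solutions of (D_0 - z) Phi = Psi into solutions of
  (D_0 - w) Phi' = (-beta cnj psi1, -cnj psi2); the corresponding map from w back to z inverts it,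
  which requires z \<noteq> m and z \<noteq> -m. The point -m is never in the resolvent set, whatever the
  sign of m: the spinor (0, 1) on an internal edge is an eigenfunction,
  and the spinors (0, exp (-/+ eps x)) on an external edge are approximate eigenfunctions.
\<close>

section \<open>Square-integrable functions and weak derivatives\<close>

lemma L2_on_iff_indicator:
  "L2_on S f \<longleftrightarrow> (\<lambda>x. indicator S x *\<^sub>R f x) \<in> borel_measurable lborel \<and>
     integrable lborel (\<lambda>x. (cmod (indicator S x *\<^sub>R f x))\<^sup>2)"
proof -
  have "(\<lambda>x. indicator S x *\<^sub>R (cmod (f x))\<^sup>2) = (\<lambda>x. (cmod (indicator S x *\<^sub>R f x))\<^sup>2)"
    by (auto simp: indicator_def)
  then show ?thesis
    unfolding L2_on_def set_borel_measurable_def set_integrable_def by simp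
qed

lemma L2_on_zero: "L2_on S (\<lambda>x. 0)"
  by (simp add: L2_on_iff_indicator)

lemma L2_on_cmult:
  assumes "L2_on S f"
  shows "L2_on S (\<lambda>x. c * f x)"
proof -
  let ?F = "\<lambda>x. indicator S x *\<^sub>R f x"
  have F: "?F \<in> borel_measurable lborel" "integrable lborel (\<lambda>x. (cmod (?F x))\<^sup>2)"
    using assms unfolding L2_on_iff_indicator by auto
  have "(\<lambda>x. indicator S x *\<^sub>R (c * f x)) = (\<lambda>x. c * ?F x)"
    by (auto simp: indicator_def)
  moreover have "(\<lambda>x. c * ?F x) \<in> borel_measurable lborel"
    using F(1) by measurable
  moreover have "integrable lborel (\<lambda>x. (cmod (c * ?F x))\<^sup>2)"
    using integrable_mult_right[OF F(2), of "(cmod c)\<^sup>2"] by (simp only: norm_mult power_mult_distrib)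
  ultimately show ?thesis
    unfolding L2_on_iff_indicator by simp
qed

lemma L2_on_add:
  assumes "L2_on S f" "L2_on S g"
  shows "L2_on S (\<lambda>x. f x + g x)"
proof -
  let ?F = "\<lambda>x. indicator S x *\<^sub>R f x" and ?G = "\<lambda>x. indicator S x *\<^sub>R g x"
  have F: "?F \<in> borel_measurable lborel" "integrable lborel (\<lambda>x. (cmod (?F x))\<^sup>2)"
    and G: "?G \<in> borel_measurable lborel" "integrable lborel (\<lambda>x. (cmod (?G x))\<^sup>2)"
    using assms unfolding L2_on_iff_indicator by auto
  have sum_sq: "norm ((cmod (u + v))\<^sup>2) \<le> norm (2 * (cmod u)\<^sup>2 + 2 * (cmod v)\<^sup>2)" for u v :: complex
  proof -
    have "(cmod (u + v))\<^sup>2 \<le> (cmod u + cmod v)\<^sup>2"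
      by (simp add: norm_triangle_ineq power_mono)
    also have "\<dots> \<le> 2 * (cmod u)\<^sup>2 + 2 * (cmod v)\<^sup>2"
      using zero_le_power2[of "cmod u - cmod v"] by (simp add: power2_sum power2_diff)
    finally show ?thesis by simp
  qed
  have "(\<lambda>x. ?F x + ?G x) \<in> borel_measurable lborel"
    using F(1) G(1) by measurable
  moreover have "integrable lborel (\<lambda>x. (cmod (?F x + ?G x))\<^sup>2)"
  proof (rule Bochner_Integration.integrable_bound)
    show "integrable lborel (\<lambda>x. 2 * (cmod (?F x))\<^sup>2 + 2 * (cmod (?G x))\<^sup>2)"
      using F(2) G(2) by (intro Bochner_Integration.integrable_add integrable_mult_right)
    show "(\<lambda>x. (cmod (?F x + ?G x))\<^sup>2) \<in> borel_measurable lborel"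
      using F(1) G(1) by measurable
    show "AE x in lborel. norm ((cmod (?F x + ?G x))\<^sup>2) \<le> norm (2 * (cmod (?F x))\<^sup>2 + 2 * (cmod (?G x))\<^sup>2)"
      by (intro AE_I2 sum_sq)
  qed
  ultimately show ?thesis
    unfolding L2_on_iff_indicator scaleR_add_right by (rule conjI)
qed

lemma L2_on_diff:
  "L2_on S f \<Longrightarrow> L2_on S g \<Longrightarrow> L2_on S (\<lambda>x. f x - g x)"
  using L2_on_add[OF _ L2_on_cmult[of S g "- 1"]] by simp

lemma L2_on_cnj:
  assumes "L2_on S f"
  shows "L2_on S (\<lambda>x. cnj (f x))"
proof -
  let ?F = "\<lambda>x. indicator S x *\<^sub>R f x"
  have F: "?F \<in> borel_measurable lborel" "integrable lborel (\<lambda>x. (cmod (?F x))\<^sup>2)"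
    using assms unfolding L2_on_iff_indicator by auto
  have "(\<lambda>x. indicator S x *\<^sub>R cnj (f x)) = (\<lambda>x. cnj (?F x))"
    by (auto simp: indicator_def)
  moreover have "(\<lambda>x. cnj (?F x)) \<in> borel_measurable lborel"
    using measurable_compose[OF F(1) borel_measurable_continuous_onI[OF continuous_on_cnj[OF continuous_on_id]]]
    by (simp add: o_def)
  ultimately show ?thesis
    using F(2) unfolding L2_on_iff_indicator by simp
qed

lemma L2_on_if_set_integrable:
  "set_integrable lborel S f \<Longrightarrow> set_integrable lborel S (\<lambda>x. (cmod (f x))\<^sup>2) \<Longrightarrow> L2_on S f"
  unfolding L2_on_def set_borel_measurable_def set_integrable_def
  using borel_measurable_integrable by blast

lemma L2_on_bounded_interval:
  assumes "continuous_on UNIV f"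
  shows "L2_on {a<..<b} f"
proof (rule L2_on_if_set_integrable)
  have f: "continuous_on {a..b} f"
    using assms by (rule continuous_on_subset) simp
  then have "continuous_on {a..b} (\<lambda>x. (cmod (f x))\<^sup>2)"
    by (intro continuous_intros)
  with f show "set_integrable lborel {a<..<b} f" "set_integrable lborel {a<..<b} (\<lambda>x. (cmod (f x))\<^sup>2)"
    by (auto intro: set_integrable_subset[OF borel_integrable_atLeastAtMost'])
qed

lemma weak_deriv_on_add:
  assumes "weak_deriv_on S f f'" "weak_deriv_on S g g'"
  shows "weak_deriv_on S (\<lambda>x. f x + g x) (\<lambda>x. f' x + g' x)"
  unfolding weak_deriv_on_def
proof (intro ballI impI conjI)
  fix x y assume xy: "x \<in> S" "y \<in> S" "x \<le> y"
  have f': "set_integrable lborel {x..y} f'" "f y - f x = (LINT t:{x..y}|lborel. f' t)"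
    and g': "set_integrable lborel {x..y} g'" "g y - g x = (LINT t:{x..y}|lborel. g' t)"
    using assms xy unfolding weak_deriv_on_def by blast+
  show "set_integrable lborel {x..y} (\<lambda>t. f' t + g' t)"
    using f'(1) g'(1) by (rule set_integral_add)
  have "(LINT t:{x..y}|lborel. f' t + g' t) = (f y - f x) + (g y - g x)"
    using f' g' by simp
  then show "f y + g y - (f x + g x) = (LINT t:{x..y}|lborel. f' t + g' t)"
    by (simp add: algebra_simps)
qed

lemma weak_deriv_on_cmult:
  assumes "weak_deriv_on S f f'"
  shows "weak_deriv_on S (\<lambda>x. c * f x) (\<lambda>x. c * f' x)"
  using assms unfolding weak_deriv_on_def
  by (simp add: right_diff_distrib[symmetric])

lemma weak_deriv_on_cnj:
  assumes "weak_deriv_on S f f'"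
  shows "weak_deriv_on S (\<lambda>x. cnj (f x)) (\<lambda>x. cnj (f' x))"
  unfolding weak_deriv_on_def
proof (intro ballI impI conjI)
  fix x y assume xy: "x \<in> S" "y \<in> S" "x \<le> y"
  have f': "set_integrable lborel {x..y} f'" "f y - f x = (LINT t:{x..y}|lborel. f' t)"
    using assms xy unfolding weak_deriv_on_def by blast+
  have ind: "indicator {x..y} t *\<^sub>R cnj (f' t) = cnj (indicator {x..y} t *\<^sub>R f' t)" for t
    by (simp add: indicator_def)
  show "set_integrable lborel {x..y} (\<lambda>t. cnj (f' t))"
    using integrable_cnj[OF f'(1)[unfolded set_integrable_def]] unfolding set_integrable_def ind .
  have "(LINT t:{x..y}|lborel. cnj (f' t)) = cnj (LINT t:{x..y}|lborel. f' t)"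
    unfolding set_lebesgue_integral_def ind by (rule Bochner_Integration.integral_cnj)
  then show "cnj (f y) - cnj (f x) = (LINT t:{x..y}|lborel. cnj (f' t))"
    by (simp add: f'(2)[symmetric])
qed

definition H1_deriv_on :: "real set \<Rightarrow> (real \<Rightarrow> complex) \<Rightarrow> (real \<Rightarrow> complex) \<Rightarrow> bool" where
  "H1_deriv_on S g h \<longleftrightarrow> continuous_on (closure S) g \<and> L2_on S g \<and> L2_on S h \<and> weak_deriv_on S g h"

lemma H1_deriv_on_zero: "H1_deriv_on S (\<lambda>x. 0) (\<lambda>x. 0)"
  by (simp add: H1_deriv_on_def weak_deriv_on_def set_integrable_def L2_on_zero)

lemma H1_deriv_on_add:
  "H1_deriv_on S f f' \<Longrightarrow> H1_deriv_on S g g' \<Longrightarrow> H1_deriv_on S (\<lambda>x. f x + g x) (\<lambda>x. f' x + g' x)"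
  unfolding H1_deriv_on_def by (simp add: continuous_on_add L2_on_add weak_deriv_on_add)

lemma H1_deriv_on_cmult:
  "H1_deriv_on S f f' \<Longrightarrow> H1_deriv_on S (\<lambda>x. c * f x) (\<lambda>x. c * f' x)"
  unfolding H1_deriv_on_def by (simp add: continuous_on_mult_left L2_on_cmult weak_deriv_on_cmult)

lemma H1_deriv_on_cnj:
  "H1_deriv_on S f f' \<Longrightarrow> H1_deriv_on S (\<lambda>x. cnj (f x)) (\<lambda>x. cnj (f' x))"
  unfolding H1_deriv_on_def by (simp add: L2_on_cnj weak_deriv_on_cnj)

lemma H1_deriv_on_if_has_vector_derivative:
  assumes deriv: "\<And>x. (g has_vector_derivative h x) (at x)" and cont: "continuous_on UNIV h"
    and "L2_on S g" "L2_on S h"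
  shows "H1_deriv_on S g h"
proof -
  have "continuous_on UNIV g"
    by (rule continuous_at_imp_continuous_on) (use deriv has_vector_derivative_continuous in blast)
  then have "continuous_on (closure S) g"
    by (rule continuous_on_subset) simp
  moreover have "weak_deriv_on S g h"
    unfolding weak_deriv_on_def
  proof (intro ballI impI conjI)
    fix x y :: real assume "x \<in> S" "y \<in> S" "x \<le> y"
    have "continuous_on {x..y} h"
      using cont by (rule continuous_on_subset) simp
    then show int: "set_integrable lborel {x..y} h"
      by (rule borel_integrable_atLeastAtMost')
    have "(h has_integral (g y - g x)) {x..y}"
      by (rule fundamental_theorem_of_calculus[OF \<open>x \<le> y\<close>]) (rule has_vector_derivative_at_within[OF deriv])
    then show "g y - g x = (LINT t:{x..y}|lborel. h t)"
      using set_borel_integral_eq_integral(2)[OF int] by (simp add: integral_unique)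
  qed
  ultimately show ?thesis
    using assms(3,4) unfolding H1_deriv_on_def by blast
qed

lemma H1_deriv_on_affine: "H1_deriv_on {a<..<b} (\<lambda>x. \<alpha> + \<beta> * complex_of_real x) (\<lambda>x. \<beta>)"
proof (rule H1_deriv_on_if_has_vector_derivative)
  fix x
  have "((\<lambda>x. complex_of_real x) has_vector_derivative complex_of_real 1) (at x)"
    by (rule has_vector_derivative_of_real) (rule DERIV_ident)
  from has_vector_derivative_add[OF has_vector_derivative_const has_vector_derivative_mult_right[OF this, of \<beta>], of \<alpha>]
  show "((\<lambda>x. \<alpha> + \<beta> * complex_of_real x) has_vector_derivative \<beta>) (at x)"
    by simp
qed (intro L2_on_bounded_interval continuous_intros)+

lemma H1_deriv_on_interpolation:
  "H1_deriv_on {a<..<b} (\<lambda>x. u + (v - u) * complex_of_real ((x - a) / (b - a)))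
     (\<lambda>x. (v - u) / complex_of_real (b - a))"
proof -
  have "(\<lambda>x. u + (v - u) * complex_of_real ((x - a) / (b - a))) =
      (\<lambda>x. (u - (v - u) / complex_of_real (b - a) * complex_of_real a) + (v - u) / complex_of_real (b - a) * complex_of_real x)"
    by (simp add: fun_eq_iff diff_divide_distrib algebra_simps)
  then show ?thesis
    using H1_deriv_on_affine by metis
qed

lemma nonneg_continuous_eq_0_if_integral_le_0:
  fixes F :: "real \<Rightarrow> real"
  assumes S: "open S" and cont: "continuous_on (closure S) F" and nonneg: "\<And>x. x \<in> closure S \<Longrightarrow> 0 \<le> F x"
    and int: "set_integrable lborel S F" and le: "(LINT x:S|lborel. F x) \<le> 0"
    and x: "x \<in> closure S"
  shows "F x = 0"
proof (rule continuous_constant_on_closure[OF cont _ x])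
  fix y assume "y \<in> S"
  then obtain d where d: "d > 0" "cball y d \<subseteq> S"
    using S open_contains_cball by blast
  have ball: "cball y d = {y - d..y + d}" "closure {y - d<..<y + d} = {y - d..y + d}"
    using d(1) by (auto simp: cball_def dist_real_def)
  have nonneg_S: "\<forall>x\<in>S. 0 \<le> F x"
    using nonneg closure_subset by blast
  have cont_d: "continuous_on {y - d..y + d} F"
    using d(2) closure_subset ball(1) by (intro continuous_on_subset[OF cont]) blast
  then have int_d: "F integrable_on {y - d..y + d}"
    by (rule integrable_continuous_interval)
  have int_S: "F integrable_on S" and "(LINT x:S|lborel. F x) = integral S F"
    using set_borel_integral_eq_integral[OF int] by blast+
  then have "integral {y - d..y + d} F \<le> 0"
    using integral_subset_le[OF _ int_d int_S nonneg_S] d(2) ball(1) le by simp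
  moreover have "0 \<le> integral {y - d..y + d} F"
    using d(2) ball(1) nonneg_S by (intro Henstock_Kurzweil_Integration.integral_nonneg[OF int_d]) auto
  ultimately have "(F has_integral 0) (closure {y - d<..<y + d})"
    using integrable_integral[OF int_d] ball(2) by simp
  then show "F y = 0"
  proof (rule has_integral_0_closure_imp_0[rotated 6])
    show "continuous_on (closure {y - d<..<y + d}) F" "y \<in> closure {y - d<..<y + d}"
      using cont_d d(1) ball(2) by simp_all
    show "0 \<le> F x" if "x \<in> {y - d<..<y + d}" for x
      using that d(2) ball(1) nonneg_S by (simp add: subset_iff)
    show "0 < emeasure lborel {y - d<..<y + d}" "emeasure lborel {y - d<..<y + d} < \<infinity>"
      "emeasure lborel (closure {y - d<..<y + d}) = emeasure lborel {y - d<..<y + d}"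
      using d(1) ball(2) by simp_all
  qed simp
qed

section \<open>Spinors on the graph and the maximal Dirac operator\<close>

lemma set_integrable_exp_external_edge:
  assumes G: "valid_graph G" and e: "e \<in> eedges G" and k: "k > 0"
  shows "set_integrable lborel (edge_int G e) (\<lambda>x. exp (orient G e * k * (x - bdpt G e)))"
proof -
  define s where "s = orient G e"
  define p where "p = bdpt G e"
  define T where "T = {x. 0 \<le> s * k * (p - x)}"
  have s: "s = -1 \<or> s = 1"
    using G e by (auto simp: valid_graph_def s_def)
  have "(\<lambda>t::real. exp (- 1 * t)) integrable_on {0..}"
    by (rule integrable_on_exp_minus_to_infinity) simp
  then have "(\<lambda>t::real. exp (- t)) integrable_on {0..}"
    by simp
  then have "(\<lambda>t::real. exp (- t)) absolutely_integrable_on {0..}"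
    by (rule nonnegative_absolutely_integrable_1) simp
  then have "integrable lebesgue (\<lambda>t::real. indicator {0..} t *\<^sub>R exp (- t))"
    unfolding set_integrable_def .
  moreover have "(\<lambda>t::real. indicator {0..} t *\<^sub>R exp (- t)) \<in> borel_measurable lborel"
    by measurable
  ultimately have "integrable lborel (\<lambda>t::real. indicator {0..} t *\<^sub>R exp (- t))"
    using integrable_completion by blast
  moreover have "- s * k \<noteq> 0"
    using s k by auto
  ultimately have "integrable lborel (\<lambda>x. indicator {0..} (s * k * p + (- s * k) * x) *\<^sub>R
      exp (- (s * k * p + (- s * k) * x)))"
    by (rule lborel_integrable_real_affine)
  moreover have "(\<lambda>x. indicator {0..} (s * k * p + (- s * k) * x) *\<^sub>R exp (- (s * k * p + (- s * k) * x)))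
     = (\<lambda>x. indicator T x *\<^sub>R exp (s * k * (x - p)))"
    by (auto simp: T_def indicator_def fun_eq_iff algebra_simps)
  ultimately have int: "set_integrable lborel T (\<lambda>x. exp (s * k * (x - p)))"
    unfolding set_integrable_def by simp
  have "e \<notin> iedges G"
    using G e by (auto simp: valid_graph_def)
  then have "edge_int G e = (if s = -1 then {p<..} else {..<p})"
    by (simp add: edge_int_def bdpt_def s_def p_def)
  then have sub: "edge_int G e \<subseteq> T"
    using s k by (auto simp: T_def mult_nonneg_nonpos)
  show ?thesis
    using set_integrable_subset[OF int _ sub] unfolding s_def p_def by (simp add: edge_int_def)
qed

lemma L2_on_exp_external_edge:
  assumes G: "valid_graph G" and e: "e \<in> eedges G" and k: "k > 0"
  shows "L2_on (edge_int G e) (\<lambda>x. c * complex_of_real (exp (orient G e * k * (x - bdpt G e))))"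
proof (rule L2_on_if_set_integrable)
  have "set_integrable lborel (edge_int G e) (\<lambda>x. complex_of_real (exp (orient G e * k * (x - bdpt G e))))"
    using set_integrable_exp_external_edge[OF G e k] unfolding set_integrable_def
    by (simp add: scaleR_conv_of_real flip: of_real_mult)
  then show "set_integrable lborel (edge_int G e) (\<lambda>x. c * complex_of_real (exp (orient G e * k * (x - bdpt G e))))"
    by (rule set_integrable_mult_right)
  have "(cmod (c * complex_of_real (exp (orient G e * k * (x - bdpt G e)))))\<^sup>2
      = (cmod c)\<^sup>2 * exp (orient G e * (2 * k) * (x - bdpt G e))" for x
    by (simp add: norm_mult power_mult_distrib power2_eq_square flip: exp_add)
  moreover have "set_integrable lborel (edge_int G e) (\<lambda>x. (cmod c)\<^sup>2 * exp (orient G e * (2 * k) * (x - bdpt G e)))"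
    using set_integrable_exp_external_edge[OF G e, of "2 * k"] k by (intro set_integrable_mult_right) simp
  ultimately show "set_integrable lborel (edge_int G e) (\<lambda>x. (cmod (c * complex_of_real (exp (orient G e * k * (x - bdpt G e)))))\<^sup>2)"
    by simp
qed

lemma H1_deriv_on_exp_external_edge:
  assumes G: "valid_graph G" and e: "e \<in> eedges G" and k: "k > 0"
  shows "H1_deriv_on (edge_int G e) (\<lambda>x. c * complex_of_real (exp (orient G e * k * (x - bdpt G e))))
     (\<lambda>x. c * complex_of_real (orient G e * k) * complex_of_real (exp (orient G e * k * (x - bdpt G e))))"
proof (rule H1_deriv_on_if_has_vector_derivative)
  fix x
  have "((\<lambda>x. exp (orient G e * k * (x - bdpt G e))) has_real_derivative
      exp (orient G e * k * (x - bdpt G e)) * (orient G e * k * (1 - 0))) (at x)"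
    by (intro DERIV_fun_exp DERIV_cmult DERIV_diff DERIV_ident DERIV_const)
  from has_vector_derivative_mult_right[OF has_vector_derivative_of_real[OF this], of c]
  show "((\<lambda>x. c * complex_of_real (exp (orient G e * k * (x - bdpt G e)))) has_vector_derivative
      c * complex_of_real (orient G e * k) * complex_of_real (exp (orient G e * k * (x - bdpt G e)))) (at x)"
    by (simp add: algebra_simps)
next
  show "continuous_on UNIV
      (\<lambda>x. c * complex_of_real (orient G e * k) * complex_of_real (exp (orient G e * k * (x - bdpt G e))))"
    by (intro continuous_intros)
qed (rule L2_on_exp_external_edge[OF G e k])+

lemma L2H_lincomb:
  "L2H G \<Phi> \<Longrightarrow> L2H G \<Psi> \<Longrightarrow> L2H G (\<lambda>j x. psc a (\<Phi> j x) + psc b (\<Psi> j x))"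
  by (simp add: L2H_def psc_def L2_on_add L2_on_cmult)

lemma normH_nonneg: "0 \<le> normH G \<Phi>"
  unfolding normH_def set_lebesgue_integral_def
  by (intro real_sqrt_ge_zero sum_nonneg Bochner_Integration.integral_nonneg) (auto simp: indicator_def)

lemma normH_le_if_pointwise_le:
  assumes L2: "L2H G \<Phi>" "L2H G \<Phi>'" and "K \<ge> 0"
    and le: "\<And>j x. j \<in> edges G \<Longrightarrow> x \<in> edge_int G j \<Longrightarrow>
      (cmod (fst (\<Phi>' j x)))\<^sup>2 + (cmod (snd (\<Phi>' j x)))\<^sup>2 \<le> K\<^sup>2 * ((cmod (fst (\<Phi> j x)))\<^sup>2 + (cmod (snd (\<Phi> j x)))\<^sup>2)"
  shows "normH G \<Phi>' \<le> K * normH G \<Phi>"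
proof -
  define I where "I \<Phi> j = (LINT x:edge_int G j|lborel. (cmod (fst (\<Phi> j x)))\<^sup>2 + (cmod (snd (\<Phi> j x)))\<^sup>2)" for \<Phi> j
  have int: "set_integrable lborel (edge_int G j) (\<lambda>x. (cmod (fst (\<Phi> j x)))\<^sup>2 + (cmod (snd (\<Phi> j x)))\<^sup>2)"
    if "L2H G \<Phi>" "j \<in> edges G" for \<Phi> j
    using that unfolding L2H_def L2_on_def by (intro set_integral_add(1)) auto
  have "I \<Phi>' j \<le> K\<^sup>2 * I \<Phi> j" if j: "j \<in> edges G" for j
    unfolding I_def set_integral_mult_right[symmetric]
    using int[OF L2(2) j] int[OF L2(1) j] le[OF j] by (intro set_integral_mono) auto
  then have "sum (I \<Phi>') (edges G) \<le> K\<^sup>2 * sum (I \<Phi>) (edges G)"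
    by (simp add: sum_distrib_left sum_mono)
  then have "sqrt (sum (I \<Phi>') (edges G)) \<le> sqrt (K\<^sup>2) * sqrt (sum (I \<Phi>) (edges G))"
    by (metis real_sqrt_le_mono real_sqrt_mult)
  then show ?thesis
    using \<open>K \<ge> 0\<close> unfolding normH_def I_def by simp
qed

lemma normH_le_0_imp_vanishes:
  assumes G: "valid_graph G" and "H1 G \<Phi>" "normH G \<Phi> \<le> 0" and j: "j \<in> edges G"
    and x: "x \<in> closure (edge_int G j)"
  shows "\<Phi> j x = (0, 0)"
proof -
  define F where "F k x = (cmod (fst (\<Phi> k x)))\<^sup>2 + (cmod (snd (\<Phi> k x)))\<^sup>2" for k x
  define I where "I k = (LINT x:edge_int G k|lborel. F k x)" for k
  have I_nonneg: "0 \<le> I k" for k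
    unfolding I_def F_def set_lebesgue_integral_def
    by (intro Bochner_Integration.integral_nonneg) (auto simp: indicator_def)
  have "sum I (edges G) \<le> 0"
    using \<open>normH G \<Phi> \<le> 0\<close> by (simp add: normH_def I_def F_def)
  moreover have "I j \<le> sum I (edges G)"
    using G j I_nonneg by (intro member_le_sum) (auto simp: valid_graph_def edges_def)
  ultimately have "I j \<le> 0"
    by linarith
  have "continuous_on (closure (edge_int G j)) (\<lambda>x. fst (\<Phi> j x))"
    "continuous_on (closure (edge_int G j)) (\<lambda>x. snd (\<Phi> j x))"
    using \<open>H1 G \<Phi>\<close> j unfolding H1_def H1_on_def by blast+
  then have cont: "continuous_on (closure (edge_int G j)) (F j)"
    unfolding F_def by (intro continuous_on_add continuous_on_power continuous_on_norm)
  have int: "set_integrable lborel (edge_int G j) (F j)"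
    using \<open>H1 G \<Phi>\<close> j unfolding F_def H1_def H1_on_def L2_on_def by (intro set_integral_add(1)) auto
  have "F j x = 0"
  proof (rule nonneg_continuous_eq_0_if_integral_le_0[OF _ cont _ int _ x])
    show "open (edge_int G j)"
      by (simp add: edge_int_def)
    show "0 \<le> F j y" for y
      by (simp add: F_def)
    show "(LINT y:edge_int G j|lborel. F j y) \<le> 0"
      using \<open>I j \<le> 0\<close> unfolding I_def .
  qed
  then show ?thesis
    by (simp add: F_def prod_eq_iff)
qed

lemma normH_pos_if_nonzero:
  assumes "valid_graph G" "H1 G \<Phi>" "j \<in> edges G" "x \<in> closure (edge_int G j)" "\<Phi> j x \<noteq> (0, 0)"
  shows "0 < normH G \<Phi>"
  using normH_le_0_imp_vanishes[of G \<Phi> j x] assms by linarith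

lemma Dmax_relI:
  assumes "L2H G \<Psi>"
    and "\<And>j. j \<in> edges G \<Longrightarrow> H1_deriv_on (edge_int G j) (\<lambda>x. fst (\<Phi> j x)) (h j)"
    and "\<And>j. j \<in> edges G \<Longrightarrow> H1_deriv_on (edge_int G j) (\<lambda>x. snd (\<Phi> j x)) (k j)"
    and "\<And>j. j \<in> edges G \<Longrightarrow> AE x in lborel. x \<in> edge_int G j \<longrightarrow>
           \<Psi> j x = (- \<i> * k j x + complex_of_real m * fst (\<Phi> j x),
                    - \<i> * h j x - complex_of_real m * snd (\<Phi> j x))"
  shows "Dmax_rel G m \<Phi> \<Psi>"
  using assms unfolding Dmax_rel_def H1_def H1_on_def H1_deriv_on_def by blast

lemma Dmax_relE:
  assumes "Dmax_rel G m \<Phi> \<Psi>"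
  obtains h k where "L2H G \<Psi>"
    and "\<And>j. j \<in> edges G \<Longrightarrow> H1_deriv_on (edge_int G j) (\<lambda>x. fst (\<Phi> j x)) (h j)"
    and "\<And>j. j \<in> edges G \<Longrightarrow> H1_deriv_on (edge_int G j) (\<lambda>x. snd (\<Phi> j x)) (k j)"
    and "\<And>j. j \<in> edges G \<Longrightarrow> AE x in lborel. x \<in> edge_int G j \<longrightarrow>
           \<Psi> j x = (- \<i> * k j x + complex_of_real m * fst (\<Phi> j x),
                    - \<i> * h j x - complex_of_real m * snd (\<Phi> j x))"
proof -
  have "\<forall>j\<in>edges G. \<exists>hk. H1_deriv_on (edge_int G j) (\<lambda>x. fst (\<Phi> j x)) (fst hk) \<and>
      H1_deriv_on (edge_int G j) (\<lambda>x. snd (\<Phi> j x)) (snd hk) \<and>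
      (AE x in lborel. x \<in> edge_int G j \<longrightarrow>
         \<Psi> j x = (- \<i> * snd hk x + complex_of_real m * fst (\<Phi> j x),
                  - \<i> * fst hk x - complex_of_real m * snd (\<Phi> j x)))"
    using assms unfolding Dmax_rel_def H1_def H1_on_def H1_deriv_on_def by fastforce
  then obtain hk where "\<forall>j\<in>edges G. H1_deriv_on (edge_int G j) (\<lambda>x. fst (\<Phi> j x)) (fst (hk j)) \<and>
      H1_deriv_on (edge_int G j) (\<lambda>x. snd (\<Phi> j x)) (snd (hk j)) \<and>
      (AE x in lborel. x \<in> edge_int G j \<longrightarrow>
         \<Psi> j x = (- \<i> * snd (hk j) x + complex_of_real m * fst (\<Phi> j x),
                  - \<i> * fst (hk j) x - complex_of_real m * snd (\<Phi> j x)))"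
    by (rule bchoice[THEN exE])
  moreover have "L2H G \<Psi>"
    using assms by (simp add: Dmax_rel_def)
  ultimately show thesis
    by (intro that[of "\<lambda>j. fst (hk j)" "\<lambda>j. snd (hk j)"]) auto
qed

lemma L2H_if_Dmax_rel: "Dmax_rel G m \<Phi> \<Psi> \<Longrightarrow> L2H G \<Phi>"
  by (auto simp: Dmax_rel_def H1_def H1_on_def L2H_def)

lemma Dmax_rel_of_H1_deriv:
  assumes "\<And>j. j \<in> edges G \<Longrightarrow> H1_deriv_on (edge_int G j) (\<lambda>x. fst (\<Phi> j x)) (h j)"
    and "\<And>j. j \<in> edges G \<Longrightarrow> H1_deriv_on (edge_int G j) (\<lambda>x. snd (\<Phi> j x)) (k j)"
  shows "Dmax_rel G m \<Phi> (\<lambda>j x. (- \<i> * k j x + complex_of_real m * fst (\<Phi> j x),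
                                  - \<i> * h j x - complex_of_real m * snd (\<Phi> j x)))"
proof (rule Dmax_relI[OF _ assms])
  have "L2_on (edge_int G j) (h j)" "L2_on (edge_int G j) (k j)"
    "L2_on (edge_int G j) (\<lambda>x. fst (\<Phi> j x))" "L2_on (edge_int G j) (\<lambda>x. snd (\<Phi> j x))"
    if "j \<in> edges G" for j
    using assms[OF that] by (simp_all add: H1_deriv_on_def)
  then show "L2H G (\<lambda>j x. (- \<i> * k j x + complex_of_real m * fst (\<Phi> j x),
                           - \<i> * h j x - complex_of_real m * snd (\<Phi> j x)))"
    unfolding L2H_def fst_conv snd_conv by (intro ballI conjI L2_on_add L2_on_diff L2_on_cmult)
qed simp_all

lemma Dmax_rel_lincomb:
  assumes "Dmax_rel G m \<Phi>\<^sub>1 \<Psi>\<^sub>1" and "Dmax_rel G m \<Phi>\<^sub>2 \<Psi>\<^sub>2"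
  shows "Dmax_rel G m (\<lambda>j x. psc a (\<Phi>\<^sub>1 j x) + psc b (\<Phi>\<^sub>2 j x)) (\<lambda>j x. psc a (\<Psi>\<^sub>1 j x) + psc b (\<Psi>\<^sub>2 j x))"
    (is "Dmax_rel G m ?\<Phi> ?\<Psi>")
proof -
  obtain h k where D: "L2H G \<Psi>\<^sub>1"
      "\<And>j. j \<in> edges G \<Longrightarrow> H1_deriv_on (edge_int G j) (\<lambda>x. fst (\<Phi>\<^sub>1 j x)) (h j)"
      "\<And>j. j \<in> edges G \<Longrightarrow> H1_deriv_on (edge_int G j) (\<lambda>x. snd (\<Phi>\<^sub>1 j x)) (k j)"
      "\<And>j. j \<in> edges G \<Longrightarrow> AE x in lborel. x \<in> edge_int G j \<longrightarrow>
         \<Psi>\<^sub>1 j x = (- \<i> * k j x + complex_of_real m * fst (\<Phi>\<^sub>1 j x),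
                   - \<i> * h j x - complex_of_real m * snd (\<Phi>\<^sub>1 j x))"
    using Dmax_relE[OF assms(1)] by blast
  obtain h' k' where D': "L2H G \<Psi>\<^sub>2"
      "\<And>j. j \<in> edges G \<Longrightarrow> H1_deriv_on (edge_int G j) (\<lambda>x. fst (\<Phi>\<^sub>2 j x)) (h' j)"
      "\<And>j. j \<in> edges G \<Longrightarrow> H1_deriv_on (edge_int G j) (\<lambda>x. snd (\<Phi>\<^sub>2 j x)) (k' j)"
      "\<And>j. j \<in> edges G \<Longrightarrow> AE x in lborel. x \<in> edge_int G j \<longrightarrow>
         \<Psi>\<^sub>2 j x = (- \<i> * k' j x + complex_of_real m * fst (\<Phi>\<^sub>2 j x),
                    - \<i> * h' j x - complex_of_real m * snd (\<Phi>\<^sub>2 j x))"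
    using Dmax_relE[OF assms(2)] by blast
  show ?thesis
  proof (rule Dmax_relI[where h = "\<lambda>j x. a * h j x + b * h' j x" and k = "\<lambda>j x. a * k j x + b * k' j x"])
    show "L2H G ?\<Psi>"
      using D(1) D'(1) by (rule L2H_lincomb)
  next
    fix j assume j: "j \<in> edges G"
    show "H1_deriv_on (edge_int G j) (\<lambda>x. fst (?\<Phi> j x)) (\<lambda>x. a * h j x + b * h' j x)"
      "H1_deriv_on (edge_int G j) (\<lambda>x. snd (?\<Phi> j x)) (\<lambda>x. a * k j x + b * k' j x)"
      unfolding psc_def using D(2,3)[OF j] D'(2,3)[OF j] by (simp_all add: H1_deriv_on_add H1_deriv_on_cmult)
    show "AE x in lborel. x \<in> edge_int G j \<longrightarrow> ?\<Psi> j x =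
      (- \<i> * (a * k j x + b * k' j x) + complex_of_real m * fst (?\<Phi> j x),
       - \<i> * (a * h j x + b * h' j x) - complex_of_real m * snd (?\<Phi> j x))"
      using D(4)[OF j] D'(4)[OF j] by eventually_elim (auto simp: psc_def algebra_simps)
  qed
qed

(* The right-hand side is found by eliminating the weak derivatives, which Dmax_rel determines as
   phi1' = i (psi2 + m phi2) and phi2' = i (psi1 - m phi1). *)
lemma Dmax_rel_antilinear:
  assumes "Dmax_rel G m \<Phi> \<Psi>"
  shows "Dmax_rel G m
     (\<lambda>j x. (a * cnj (fst (\<Phi> j x)) + b * cnj (snd (\<Phi> j x)), c * cnj (fst (\<Phi> j x)) + d * cnj (snd (\<Phi> j x))))
     (\<lambda>j x. (complex_of_real m * ((a + d) * cnj (fst (\<Phi> j x)) + (b - c) * cnj (snd (\<Phi> j x)))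
              - (d * cnj (fst (\<Psi> j x)) + c * cnj (snd (\<Psi> j x))),
            complex_of_real m * ((b - c) * cnj (fst (\<Phi> j x)) - (a + d) * cnj (snd (\<Phi> j x)))
              - (b * cnj (fst (\<Psi> j x)) + a * cnj (snd (\<Psi> j x)))))"
    (is "Dmax_rel G m ?\<Phi>' ?\<Psi>'")
proof -
  obtain h k where D: "L2H G \<Psi>"
      "\<And>j. j \<in> edges G \<Longrightarrow> H1_deriv_on (edge_int G j) (\<lambda>x. fst (\<Phi> j x)) (h j)"
      "\<And>j. j \<in> edges G \<Longrightarrow> H1_deriv_on (edge_int G j) (\<lambda>x. snd (\<Phi> j x)) (k j)"
      "\<And>j. j \<in> edges G \<Longrightarrow> AE x in lborel. x \<in> edge_int G j \<longrightarrow>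
         \<Psi> j x = (- \<i> * k j x + complex_of_real m * fst (\<Phi> j x),
                  - \<i> * h j x - complex_of_real m * snd (\<Phi> j x))"
    using Dmax_relE[OF assms] by blast
  have L2: "L2H G \<Phi>"
    using assms by (rule L2H_if_Dmax_rel)
  show ?thesis
  proof (rule Dmax_relI[where h = "\<lambda>j x. a * cnj (h j x) + b * cnj (k j x)"
        and k = "\<lambda>j x. c * cnj (h j x) + d * cnj (k j x)"])
    show "L2H G ?\<Psi>'"
      using D(1) L2 unfolding L2H_def by (auto intro!: L2_on_add L2_on_diff L2_on_cmult L2_on_cnj)
  next
    fix j assume j: "j \<in> edges G"
    show "H1_deriv_on (edge_int G j) (\<lambda>x. fst (?\<Phi>' j x)) (\<lambda>x. a * cnj (h j x) + b * cnj (k j x))"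
      "H1_deriv_on (edge_int G j) (\<lambda>x. snd (?\<Phi>' j x)) (\<lambda>x. c * cnj (h j x) + d * cnj (k j x))"
      using D(2,3)[OF j] by (simp_all add: H1_deriv_on_add H1_deriv_on_cmult H1_deriv_on_cnj)
    show "AE x in lborel. x \<in> edge_int G j \<longrightarrow> ?\<Psi>' j x =
      (- \<i> * (c * cnj (h j x) + d * cnj (k j x)) + complex_of_real m * fst (?\<Phi>' j x),
       - \<i> * (a * cnj (h j x) + b * cnj (k j x)) - complex_of_real m * snd (?\<Phi>' j x))"
      using D(4)[OF j] by eventually_elim (auto simp: algebra_simps)
  qed
qed

section \<open>Boundary maps and charge conjugation\<close>

lemma orient_mult_self: "valid_graph G \<Longrightarrow> e \<in> eedges G \<Longrightarrow> orient G e * orient G e = 1"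
  by (auto simp: valid_graph_def)

lemma Gamma1_chargeC:
  assumes "valid_graph G"
  shows "Gamma1 G (chargeC \<Phi>) = VC G (Gamma2 G \<Phi>)"
proof
  fix j
  have "j \<in> eedges G \<Longrightarrow> complex_of_real (orient G j) * complex_of_real (orient G j) = 1"
    using orient_mult_self[OF assms] by (metis of_real_1 of_real_mult)
  then show "Gamma1 G (chargeC \<Phi>) j = VC G (Gamma2 G \<Phi>) j"
    by (auto simp: Gamma1_def Gamma2_def VC_def chargeC_def algebra_simps)
qed

lemma Gamma2_chargeC: "Gamma2 G (chargeC \<Phi>) = VC G (Gamma1 G \<Phi>)"
  by (auto simp: Gamma1_def Gamma2_def VC_def chargeC_def)

lemma Gamma2_in_bspace: "valid_graph G \<Longrightarrow> Gamma2 G \<Phi> \<in> bspace G"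
  by (auto simp: Gamma2_def bspace_def edges_def valid_graph_def)

lemma VC_in_bspace: "valid_graph G \<Longrightarrow> VC G \<omega> \<in> bspace G"
  by (auto simp: VC_def bspace_def edges_def valid_graph_def)

lemma VC_VC:
  assumes "valid_graph G" "\<omega> \<in> bspace G"
  shows "VC G (VC G \<omega>) = \<omega>"
proof
  fix j
  have "j \<in> eedges G \<Longrightarrow> complex_of_real (orient G j) * complex_of_real (orient G j) = 1"
    using orient_mult_self[OF assms(1)] by (metis of_real_1 of_real_mult)
  moreover have "j \<notin> edges G \<Longrightarrow> \<omega> j = (0, 0)" "j \<in> eedges G \<Longrightarrow> snd (\<omega> j) = 0"
    using assms(2) by (auto simp: bspace_def)
  ultimately show "VC G (VC G \<omega>) j = \<omega> j"
    by (cases "\<omega> j") (auto simp: VC_def edges_def algebra_simps)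
qed

lemma Gamma1_diff: "Gamma1 G (\<lambda>j x. \<Phi> j x - \<Phi>' j x) = (\<lambda>j. Gamma1 G \<Phi> j - Gamma1 G \<Phi>' j)"
  by (auto simp: Gamma1_def zero_prod_def)

lemma Gamma2_diff: "Gamma2 G (\<lambda>j x. \<Phi> j x - \<Phi>' j x) = (\<lambda>j. Gamma2 G \<Phi> j - Gamma2 G \<Phi>' j)"
  by (auto simp: Gamma2_def algebra_simps zero_prod_def)

lemma Dmax_rel_with_Gamma1:
  assumes G: "valid_graph G" and \<omega>: "\<omega> \<in> bspace G"
  obtains \<Phi> \<Psi> where "Dmax_rel G m \<Phi> \<Psi>" "Gamma1 G \<Phi> = \<omega>"
proof -
  define f where "f j x = (if j \<in> iedges G
      then fst (\<omega> j) + (snd (\<omega> j) - fst (\<omega> j)) * complex_of_real ((x - lft G j) / (rgt G j - lft G j))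
      else fst (\<omega> j) * complex_of_real (exp (orient G j * (x - bdpt G j))))" for j x
  define h where "h j = (if j \<in> iedges G then (\<lambda>x. (snd (\<omega> j) - fst (\<omega> j)) / complex_of_real (rgt G j - lft G j))
      else (\<lambda>x. fst (\<omega> j) * complex_of_real (orient G j) * complex_of_real (exp (orient G j * (x - bdpt G j)))))"
    for j
  define \<Phi> where "\<Phi> j x = (f j x, 0 :: complex)" for j x
  have "H1_deriv_on (edge_int G j) (\<lambda>x. fst (\<Phi> j x)) (h j)" if j: "j \<in> edges G" for j
  proof (cases "j \<in> iedges G")
    case True
    then show ?thesis
      using H1_deriv_on_interpolation by (simp add: \<Phi>_def f_def h_def edge_int_def)
  next
    case False
    with j have "j \<in> eedges G"
      by (simp add: edges_def)
    with False show ?thesis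
      using H1_deriv_on_exp_external_edge[OF G \<open>j \<in> eedges G\<close> zero_less_one] by (simp add: \<Phi>_def f_def h_def)
  qed
  moreover have "H1_deriv_on (edge_int G j) (\<lambda>x. snd (\<Phi> j x)) (\<lambda>x. 0)" for j
    by (simp add: \<Phi>_def H1_deriv_on_zero)
  ultimately have "Dmax_rel G m \<Phi> (\<lambda>j x. (- \<i> * 0 + complex_of_real m * fst (\<Phi> j x),
                                           - \<i> * h j x - complex_of_real m * snd (\<Phi> j x)))"
    by (rule Dmax_rel_of_H1_deriv)
  moreover have "Gamma1 G \<Phi> j = \<omega> j" for j
  proof -
    consider "j \<in> iedges G" | "j \<in> eedges G" "j \<notin> iedges G" | "j \<notin> edges G"
      by (auto simp: edges_def)
    then show ?thesis
    proof cases
      case 1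
      then have "rgt G j - lft G j \<noteq> 0"
        using G by (auto simp: valid_graph_def)
      with 1 show ?thesis
        by (simp add: Gamma1_def \<Phi>_def f_def prod_eq_iff)
    next
      case 2
      with \<omega> show ?thesis
        by (simp add: Gamma1_def \<Phi>_def f_def bspace_def prod_eq_iff)
    next
      case 3
      with \<omega> show ?thesis
        by (simp add: Gamma1_def bspace_def edges_def)
    qed
  qed
  ultimately show thesis
    by (intro that) auto
qed

definition in_ker_Dmax :: "'j mgraph \<Rightarrow> real \<Rightarrow> complex \<Rightarrow> ('j \<Rightarrow> real \<Rightarrow> complex \<times> complex) \<Rightarrow> bool" where
  "in_ker_Dmax G m z \<Phi> \<longleftrightarrow> Dmax_rel G m \<Phi> (\<lambda>j x. psc z (\<Phi> j x))"

lemma in_ker_Dmax_diff: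
  assumes "in_ker_Dmax G m z \<Phi>" "in_ker_Dmax G m z \<Phi>'"
  shows "in_ker_Dmax G m z (\<lambda>j x. \<Phi> j x - \<Phi>' j x)"
proof -
  have "Dmax_rel G m (\<lambda>j x. psc 1 (\<Phi> j x) + psc (- 1) (\<Phi>' j x))
      (\<lambda>j x. psc 1 (psc z (\<Phi> j x)) + psc (- 1) (psc z (\<Phi>' j x)))"
    using assms unfolding in_ker_Dmax_def by (rule Dmax_rel_lincomb)
  moreover have "(\<lambda>j x. psc 1 (\<Phi> j x) + psc (- 1) (\<Phi>' j x)) = (\<lambda>j x. \<Phi> j x - \<Phi>' j x)"
    "(\<lambda>j x. psc 1 (psc z (\<Phi> j x)) + psc (- 1) (psc z (\<Phi>' j x))) = (\<lambda>j x. psc z (\<Phi> j x - \<Phi>' j x))"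
    by (auto simp: psc_def fun_eq_iff prod_eq_iff algebra_simps)
  ultimately show ?thesis
    unfolding in_ker_Dmax_def by simp
qed

lemma in_ker_Dmax_chargeC:
  assumes "in_ker_Dmax G m z \<Phi>"
  shows "in_ker_Dmax G m (- cnj z) (chargeC \<Phi>)"
  using Dmax_rel_antilinear[OF assms[unfolded in_ker_Dmax_def], of 0 1 1 0]
  unfolding in_ker_Dmax_def chargeC_def[abs_def] by (simp add: psc_def)

section \<open>The Weyl function\<close>

lemma resolvent_D0_bound:
  assumes "z \<in> resolvent_D0 G m"
  obtains c where "c \<ge> 0"
    "\<And>\<Phi> \<Psi>. L2H G \<Psi> \<Longrightarrow> D0_rel G m \<Phi> (\<lambda>j x. \<Psi> j x + psc z (\<Phi> j x)) \<Longrightarrow> normH G \<Phi> \<le> c * normH G \<Psi>"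
proof -
  obtain c where c: "\<And>\<Phi> \<Psi>. L2H G \<Psi> \<Longrightarrow> D0_rel G m \<Phi> (\<lambda>j x. \<Psi> j x + psc z (\<Phi> j x))
      \<Longrightarrow> normH G \<Phi> \<le> c * normH G \<Psi>"
    using assms unfolding resolvent_D0_def by blast
  have "c * normH G \<Psi> \<le> max c 0 * normH G \<Psi>" for \<Psi>
    by (intro mult_right_mono normH_nonneg) simp
  with c show thesis
    by (intro that[of "max c 0"]) (auto intro: order_trans)
qed

lemma Gamma2_eq_0_if_Gamma1_eq_0:
  assumes G: "valid_graph G" and z: "z \<in> resolvent_D0 G m" and ker: "in_ker_Dmax G m z \<Phi>"
    and Gamma1: "Gamma1 G \<Phi> = (\<lambda>j. (0, 0))"
  shows "Gamma2 G \<Phi> = (\<lambda>j. (0, 0))"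
proof -
  obtain c where c: "\<And>\<Phi> \<Psi>. L2H G \<Psi> \<Longrightarrow> D0_rel G m \<Phi> (\<lambda>j x. \<Psi> j x + psc z (\<Phi> j x))
      \<Longrightarrow> normH G \<Phi> \<le> c * normH G \<Psi>"
    using z unfolding resolvent_D0_def by blast
  have "D0_rel G m \<Phi> (\<lambda>j x. (0, 0) + psc z (\<Phi> j x))"
    using ker Gamma1 by (simp add: D0_rel_def in_ker_Dmax_def flip: zero_prod_def)
  moreover have "L2H G (\<lambda>j x. (0, 0))"
    by (simp add: L2H_def L2_on_zero)
  ultimately have "normH G \<Phi> \<le> 0"
    using c by (fastforce simp: normH_def)
  moreover have "H1 G \<Phi>"
    using ker by (simp add: in_ker_Dmax_def Dmax_rel_def)
  ultimately have vanish: "\<Phi> j x = (0, 0)" if "j \<in> edges G" "x \<in> closure (edge_int G j)" for j x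
    using normH_le_0_imp_vanishes[OF G] that by blast
  show ?thesis
  proof
    fix j
    have "lft G j \<in> closure (edge_int G j)" "rgt G j \<in> closure (edge_int G j)" if "j \<in> iedges G"
      using G that by (auto simp: edge_int_def valid_graph_def)
    moreover have "bdpt G j \<in> closure (edge_int G j)" if "j \<in> eedges G"
      using G that by (auto simp: edge_int_def valid_graph_def bdpt_def)
    ultimately show "Gamma2 G \<Phi> j = (0, 0)"
      using vanish[of j] by (auto simp: Gamma2_def edges_def)
  qed
qed

lemma in_ker_Dmax_with_Gamma1:
  assumes G: "valid_graph G" and z: "z \<in> resolvent_D0 G m" and \<omega>: "\<omega> \<in> bspace G"
  obtains \<Phi> where "in_ker_Dmax G m z \<Phi>" "Gamma1 G \<Phi> = \<omega>"
proof -
  obtain \<Phi>0 \<Psi>0 where D: "Dmax_rel G m \<Phi>0 \<Psi>0" and \<Phi>0: "Gamma1 G \<Phi>0 = \<omega>"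
    using Dmax_rel_with_Gamma1[OF G \<omega>] by blast
  define \<Xi> where "\<Xi> j x = psc 1 (\<Psi>0 j x) + psc (- z) (\<Phi>0 j x)" for j x
  have "L2H G \<Xi>"
    unfolding \<Xi>_def[abs_def] using D by (blast intro: L2H_lincomb L2H_if_Dmax_rel elim: Dmax_relE)
  then obtain \<Phi>1 where D1: "Dmax_rel G m \<Phi>1 (\<lambda>j x. \<Xi> j x + psc z (\<Phi>1 j x))"
    and \<Phi>1: "Gamma1 G \<Phi>1 = (\<lambda>j. (0, 0))"
    using z unfolding resolvent_D0_def D0_rel_def by blast
  have "Dmax_rel G m (\<lambda>j x. psc 1 (\<Phi>0 j x) + psc (- 1) (\<Phi>1 j x))
      (\<lambda>j x. psc 1 (\<Psi>0 j x) + psc (- 1) (\<Xi> j x + psc z (\<Phi>1 j x)))"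
    using D D1 by (rule Dmax_rel_lincomb)
  moreover have "(\<lambda>j x. psc 1 (\<Phi>0 j x) + psc (- 1) (\<Phi>1 j x)) = (\<lambda>j x. \<Phi>0 j x - \<Phi>1 j x)"
    "(\<lambda>j x. psc 1 (\<Psi>0 j x) + psc (- 1) (\<Xi> j x + psc z (\<Phi>1 j x))) = (\<lambda>j x. psc z (\<Phi>0 j x - \<Phi>1 j x))"
    by (auto simp: \<Xi>_def psc_def fun_eq_iff prod_eq_iff algebra_simps)
  moreover have "Gamma1 G (\<lambda>j x. \<Phi>0 j x - \<Phi>1 j x) = \<omega>"
    using \<Phi>0 \<Phi>1 by (simp add: Gamma1_diff flip: zero_prod_def)
  ultimately show thesis
    by (intro that[of "\<lambda>j x. \<Phi>0 j x - \<Phi>1 j x"]) (simp_all add: in_ker_Dmax_def)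
qed

lemma Qfun_Gamma1:
  assumes G: "valid_graph G" and z: "z \<in> resolvent_D0 G m" and ker: "in_ker_Dmax G m z \<Phi>"
  shows "Qfun G m z (Gamma1 G \<Phi>) = Gamma2 G \<Phi>"
  unfolding Qfun_def
proof (rule the_equality)
  show "\<exists>\<Phi>'. Dmax_rel G m \<Phi>' (\<lambda>j x. psc z (\<Phi>' j x)) \<and> Gamma1 G \<Phi>' = Gamma1 G \<Phi> \<and> Gamma2 G \<Phi>' = Gamma2 G \<Phi>"
    using ker unfolding in_ker_Dmax_def by blast
next
  fix \<eta> assume "\<exists>\<Phi>'. Dmax_rel G m \<Phi>' (\<lambda>j x. psc z (\<Phi>' j x)) \<and> Gamma1 G \<Phi>' = Gamma1 G \<Phi> \<and> Gamma2 G \<Phi>' = \<eta>"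
  then obtain \<Phi>' where ker': "in_ker_Dmax G m z \<Phi>'" and "Gamma1 G \<Phi>' = Gamma1 G \<Phi>" "Gamma2 G \<Phi>' = \<eta>"
    unfolding in_ker_Dmax_def by blast
  moreover have "Gamma2 G (\<lambda>j x. \<Phi>' j x - \<Phi> j x) = (\<lambda>j. (0, 0))"
    using calculation by (intro Gamma2_eq_0_if_Gamma1_eq_0[OF G z in_ker_Dmax_diff[OF ker' ker]])
      (simp add: Gamma1_diff zero_prod_def)
  ultimately show "\<eta> = Gamma2 G \<Phi>"
    by (auto simp: Gamma2_diff fun_eq_iff simp flip: zero_prod_def)
qed

lemma Qfun_in_bspace:
  assumes G: "valid_graph G" and z: "z \<in> resolvent_D0 G m" and \<omega>: "\<omega> \<in> bspace G"
  shows "Qfun G m z \<omega> \<in> bspace G"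
proof -
  obtain \<Phi> where "in_ker_Dmax G m z \<Phi>" "Gamma1 G \<Phi> = \<omega>"
    using in_ker_Dmax_with_Gamma1[OF G z \<omega>] by blast
  then show ?thesis
    using Qfun_Gamma1[OF G z] Gamma2_in_bspace[OF G] by metis
qed

lemma Qfun_VC_Qfun:
  assumes G: "valid_graph G" and z: "z \<in> resolvent_D0 G m" "- cnj z \<in> resolvent_D0 G m"
    and \<omega>: "\<omega> \<in> bspace G"
  shows "Qfun G m (- cnj z) (VC G (Qfun G m z \<omega>)) = VC G \<omega>"
proof -
  obtain \<Phi> where ker: "in_ker_Dmax G m z \<Phi>" and \<Phi>: "Gamma1 G \<Phi> = \<omega>"
    using in_ker_Dmax_with_Gamma1[OF G z(1) \<omega>] by blast
  have "Qfun G m (- cnj z) (Gamma1 G (chargeC \<Phi>)) = Gamma2 G (chargeC \<Phi>)"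
    using Qfun_Gamma1[OF G z(2) in_ker_Dmax_chargeC[OF ker]] .
  then show ?thesis
    using \<Phi> by (simp add: Gamma1_chargeC[OF G] Gamma2_chargeC Qfun_Gamma1[OF G z(1) ker, unfolded \<Phi>])
qed

lemma bij_betw_with_conjugate_inverse:
  assumes maps: "f ` A \<subseteq> A" "g ` A \<subseteq> A" "V ` A \<subseteq> A" and V: "\<And>a. a \<in> A \<Longrightarrow> V (V a) = a"
    and gf: "\<And>a. a \<in> A \<Longrightarrow> g (V (f a)) = V a" and fg: "\<And>a. a \<in> A \<Longrightarrow> f (V (g a)) = V a"
  shows "bij_betw f A A" "\<And>a. a \<in> A \<Longrightarrow> g a = V (inv_into A f (V a))"
proof -
  have inj: "inj_on f A"
  proof (rule inj_onI)
    fix a b assume "a \<in> A" "b \<in> A" "f a = f b"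
    then have "V a = V b"
      by (metis gf)
    then show "a = b"
      by (metis V \<open>a \<in> A\<close> \<open>b \<in> A\<close>)
  qed
  have "a \<in> f ` A" if "a \<in> A" for a
    using fg[of "V a"] V[OF that] maps that by (metis image_subset_iff rev_image_eqI)
  with maps(1) have "f ` A = A"
    by blast
  with inj show "bij_betw f A A"
    by (simp add: bij_betw_def)
  fix a assume a: "a \<in> A"
  then have "inv_into A f (V a) = V (g a)"
    using fg[OF a] maps inj by (metis image_subset_iff inv_into_f_f)
  then show "g a = V (inv_into A f (V a))"
    using V a maps by (metis image_subset_iff)
qed

section \<open>Reflection of the resolvent set\<close>

definition cnj_diag :: "complex \<Rightarrow> complex \<Rightarrow> ('j \<Rightarrow> real \<Rightarrow> complex \<times> complex) \<Rightarrow> 'j \<Rightarrow> real \<Rightarrow> complex \<times> complex" where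
  "cnj_diag a b \<Phi> j x = (a * cnj (fst (\<Phi> j x)), b * cnj (snd (\<Phi> j x)))"

lemma cnj_diag_cnj_diag: "a * cnj c = 1 \<Longrightarrow> b * cnj d = 1 \<Longrightarrow> cnj_diag a b (cnj_diag c d \<Phi>) = \<Phi>"
  by (simp add: cnj_diag_def fun_eq_iff mult.assoc[symmetric])

lemma L2H_cnj_diag: "L2H G \<Phi> \<Longrightarrow> L2H G (cnj_diag a b \<Phi>)"
  by (simp add: L2H_def cnj_diag_def L2_on_cmult L2_on_cnj)

lemma normH_cnj_diag_le:
  assumes "L2H G \<Phi>"
  shows "normH G (cnj_diag a b \<Phi>) \<le> max (cmod a) (cmod b) * normH G \<Phi>"
proof (rule normH_le_if_pointwise_le[OF assms L2H_cnj_diag[OF assms]])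
  fix j x
  have "(cmod a)\<^sup>2 \<le> (max (cmod a) (cmod b))\<^sup>2" "(cmod b)\<^sup>2 \<le> (max (cmod a) (cmod b))\<^sup>2"
    by (simp_all add: power_mono)
  then show "(cmod (fst (cnj_diag a b \<Phi> j x)))\<^sup>2 + (cmod (snd (cnj_diag a b \<Phi> j x)))\<^sup>2
      \<le> (max (cmod a) (cmod b))\<^sup>2 * ((cmod (fst (\<Phi> j x)))\<^sup>2 + (cmod (snd (\<Phi> j x)))\<^sup>2)"
    by (simp add: cnj_diag_def norm_mult power_mult_distrib distrib_left add_mono mult_right_mono)
qed (simp add: le_max_iff_disj)

lemma Gamma1_cnj_diag:
  "Gamma1 G (cnj_diag a b \<Phi>) = (\<lambda>j. (a * cnj (fst (Gamma1 G \<Phi> j)), a * cnj (snd (Gamma1 G \<Phi> j))))"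
  by (auto simp: Gamma1_def cnj_diag_def)

definition reflection_coeff :: "real \<Rightarrow> complex \<Rightarrow> complex" where
  "reflection_coeff m z = (- cnj z - complex_of_real m) / (- cnj z + complex_of_real m)"

lemma reflection_coeff_eq:
  assumes "z \<noteq> complex_of_real m"
  shows "reflection_coeff m z * (complex_of_real m - cnj z) = - cnj z - complex_of_real m"
proof -
  have "- cnj z + complex_of_real m \<noteq> 0"
    using assms by (auto simp: complex_eq_iff)
  then show ?thesis
    by (simp add: reflection_coeff_def)
qed

lemma reflection_coeff_mult_cnj:
  assumes "z \<noteq> complex_of_real m" "z \<noteq> - complex_of_real m"
  shows "reflection_coeff m z * cnj (reflection_coeff m (- cnj z)) = 1"
proof -
  have "cnj z + complex_of_real m \<noteq> 0" "cnj z - complex_of_real m \<noteq> 0"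
    using assms by (auto simp: complex_eq_iff)
  moreover from this have "complex_of_real m * complex_of_real m \<noteq> cnj z * cnj z"
    by (auto simp: square_eq_iff)
  ultimately show ?thesis
    by (simp add: reflection_coeff_def field_simps)
qed

lemma D0_rel_cnj_diag:
  assumes D0: "D0_rel G m \<Phi> (\<lambda>j x. \<Psi> j x + psc z (\<Phi> j x))" and z: "z \<noteq> complex_of_real m"
  defines "\<beta> \<equiv> reflection_coeff m z"
  shows "D0_rel G m (cnj_diag 1 \<beta> \<Phi>) (\<lambda>j x. cnj_diag (- \<beta>) (- 1) \<Psi> j x + psc (- cnj z) (cnj_diag 1 \<beta> \<Phi> j x))"
proof -
  let ?M = "complex_of_real m"
  have "Dmax_rel G m
     (\<lambda>j x. (1 * cnj (fst (\<Phi> j x)) + 0 * cnj (snd (\<Phi> j x)), 0 * cnj (fst (\<Phi> j x)) + \<beta> * cnj (snd (\<Phi> j x))))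
     (\<lambda>j x. (?M * ((1 + \<beta>) * cnj (fst (\<Phi> j x)) + (0 - 0) * cnj (snd (\<Phi> j x)))
              - (\<beta> * cnj (fst (\<Psi> j x + psc z (\<Phi> j x))) + 0 * cnj (snd (\<Psi> j x + psc z (\<Phi> j x)))),
            ?M * ((0 - 0) * cnj (fst (\<Phi> j x)) - (1 + \<beta>) * cnj (snd (\<Phi> j x)))
              - (0 * cnj (fst (\<Psi> j x + psc z (\<Phi> j x))) + 1 * cnj (snd (\<Psi> j x + psc z (\<Phi> j x))))))"
    (is "Dmax_rel G m ?\<Phi>' ?\<Psi>'")
    using D0 unfolding D0_rel_def by (intro Dmax_rel_antilinear) blast
  moreover have "?M * ((1 + \<beta>) * u) - \<beta> * (v + cnj z * u) = - (\<beta> * v) - cnj z * u"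
    "- (?M * ((1 + \<beta>) * u)) - cnj z * u = - (cnj z * (\<beta> * u))" for u v
    using reflection_coeff_eq[OF z] unfolding \<beta>_def by algebra+
  then have "?\<Psi>' = (\<lambda>j x. cnj_diag (- \<beta>) (- 1) \<Psi> j x + psc (- cnj z) (cnj_diag 1 \<beta> \<Phi> j x))"
    by (simp add: fun_eq_iff cnj_diag_def psc_def)
  moreover have "Gamma1 G (cnj_diag 1 \<beta> \<Phi>) = (\<lambda>j. (0, 0))"
    using D0 by (simp add: D0_rel_def Gamma1_cnj_diag)
  ultimately show ?thesis
    unfolding D0_rel_def by (simp add: cnj_diag_def[abs_def])
qed

lemma resolvent_D0_reflect_if_ne:
  assumes z: "z \<in> resolvent_D0 G m" and ne: "z \<noteq> complex_of_real m" "z \<noteq> - complex_of_real m"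
  shows "- cnj z \<in> resolvent_D0 G m"
proof -
  define w where "w = - cnj z"
  define \<beta> where "\<beta> = reflection_coeff m z"
  define \<beta>' where "\<beta>' = reflection_coeff m w"
  have w: "w \<noteq> complex_of_real m" "- cnj w = z"
    using ne(2) by (auto simp: w_def complex_eq_iff)
  have \<beta>\<beta>': "\<beta> * cnj \<beta>' = 1" "- \<beta> * cnj (- \<beta>') = 1"
    using reflection_coeff_mult_cnj[OF ne] by (simp_all add: \<beta>_def \<beta>'_def w_def)
  obtain c where "c \<ge> 0" and c: "\<And>\<Phi> \<Psi>. L2H G \<Psi> \<Longrightarrow> D0_rel G m \<Phi> (\<lambda>j x. \<Psi> j x + psc z (\<Phi> j x))
      \<Longrightarrow> normH G \<Phi> \<le> c * normH G \<Psi>"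
    using resolvent_D0_bound[OF z] by blast
  have "\<exists>\<Phi>. D0_rel G m \<Phi> (\<lambda>j x. \<Psi> j x + psc w (\<Phi> j x))" if \<Psi>: "L2H G \<Psi>" for \<Psi>
  proof -
    obtain \<Phi> where "D0_rel G m \<Phi> (\<lambda>j x. cnj_diag (- \<beta>') (- 1) \<Psi> j x + psc z (\<Phi> j x))"
      using z L2H_cnj_diag[OF \<Psi>] unfolding resolvent_D0_def by blast
    from D0_rel_cnj_diag[OF this ne(1)] show ?thesis
      using \<beta>\<beta>' by (auto simp: cnj_diag_cnj_diag w_def \<beta>_def)
  qed
  moreover have "normH G \<Phi> \<le> max 1 (cmod \<beta>) * c * max (cmod \<beta>') 1 * normH G \<Psi>"
    if \<Psi>: "L2H G \<Psi>" and D0: "D0_rel G m \<Phi> (\<lambda>j x. \<Psi> j x + psc w (\<Phi> j x))" for \<Phi> \<Psi>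
  proof -
    have \<Phi>: "L2H G \<Phi>"
      using D0 L2H_if_Dmax_rel unfolding D0_rel_def by blast
    have "normH G (cnj_diag 1 \<beta>' \<Phi>) \<le> c * normH G (cnj_diag (- \<beta>') (- 1) \<Psi>)"
      using c L2H_cnj_diag[OF \<Psi>] D0_rel_cnj_diag[OF D0 w(1)] by (simp add: w(2) \<beta>'_def)
    also have "\<dots> \<le> c * (max (cmod \<beta>') 1 * normH G \<Psi>)"
      using normH_cnj_diag_le[OF \<Psi>, of "- \<beta>'" "- 1"] \<open>c \<ge> 0\<close> by (simp add: mult_left_mono)
    finally have "normH G (cnj_diag 1 \<beta>' \<Phi>) \<le> c * (max (cmod \<beta>') 1 * normH G \<Psi>)" .
    moreover have "normH G \<Phi> \<le> max 1 (cmod \<beta>) * normH G (cnj_diag 1 \<beta>' \<Phi>)"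
      using normH_cnj_diag_le[OF L2H_cnj_diag[OF \<Phi>, of 1 \<beta>'], of 1 \<beta>] \<beta>\<beta>'(1) by (simp add: cnj_diag_cnj_diag)
    ultimately show ?thesis
      by (smt (verit) mult.assoc mult_left_mono norm_ge_zero max.cobounded1)
  qed
  ultimately show ?thesis
    unfolding resolvent_D0_def w_def[symmetric] by blast
qed

lemma notin_resolvent_D0_if_approx_eigenfunctions:
  assumes approx: "\<And>\<epsilon>. \<epsilon> > 0 \<Longrightarrow> \<exists>\<Phi> \<Psi>. L2H G \<Psi> \<and> D0_rel G m \<Phi> (\<lambda>j x. \<Psi> j x + psc z (\<Phi> j x)) \<and>
      normH G \<Psi> \<le> \<epsilon> * normH G \<Phi> \<and> 0 < normH G \<Phi>"
  shows "z \<notin> resolvent_D0 G m"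
proof
  assume "z \<in> resolvent_D0 G m"
  then obtain c where "c \<ge> 0" and c: "\<And>\<Phi> \<Psi>. L2H G \<Psi> \<Longrightarrow> D0_rel G m \<Phi> (\<lambda>j x. \<Psi> j x + psc z (\<Phi> j x))
      \<Longrightarrow> normH G \<Phi> \<le> c * normH G \<Psi>"
    using resolvent_D0_bound by blast
  obtain \<Phi> \<Psi> where \<Psi>: "L2H G \<Psi>" and D0: "D0_rel G m \<Phi> (\<lambda>j x. \<Psi> j x + psc z (\<Phi> j x))"
    and small: "normH G \<Psi> \<le> 1 / (c + 1) * normH G \<Phi>" and pos: "0 < normH G \<Phi>"
    using approx[of "1 / (c + 1)"] \<open>c \<ge> 0\<close> by auto
  have "normH G \<Phi> \<le> c / (c + 1) * normH G \<Phi>"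
    using c[OF \<Psi> D0] mult_left_mono[OF small \<open>c \<ge> 0\<close>] by simp
  moreover have "c / (c + 1) * normH G \<Phi> < normH G \<Phi>"
    using pos \<open>c \<ge> 0\<close> by (simp add: field_simps)
  ultimately show False
    by simp
qed

lemma approx_eigenfunction_minus_m_internal:
  fixes G :: "'j mgraph"
  assumes G: "valid_graph G" and i: "i \<in> iedges G" and "\<epsilon> > 0"
  shows "\<exists>\<Phi> \<Psi>. L2H G \<Psi> \<and> D0_rel G m \<Phi> (\<lambda>j x. \<Psi> j x + psc (- complex_of_real m) (\<Phi> j x)) \<and>
      normH G \<Psi> \<le> \<epsilon> * normH G \<Phi> \<and> 0 < normH G \<Phi>"
proof -
  define \<Phi> :: "'j \<Rightarrow> real \<Rightarrow> complex \<times> complex" where "\<Phi> j x = (if j = i then (0, 1) else (0, 0))" for j x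
  have "H1_deriv_on (edge_int G j) (\<lambda>x. fst (\<Phi> j x)) (\<lambda>x. 0)" for j
    by (simp add: \<Phi>_def H1_deriv_on_zero)
  moreover have "H1_deriv_on (edge_int G j) (\<lambda>x. snd (\<Phi> j x)) (\<lambda>x. 0)" for j
    using H1_deriv_on_affine[of "lft G i" "rgt G i" 1 0] i
    by (cases "j = i") (simp_all add: \<Phi>_def edge_int_def H1_deriv_on_zero)
  ultimately have "Dmax_rel G m \<Phi> (\<lambda>j x. (- \<i> * 0 + complex_of_real m * fst (\<Phi> j x),
      - \<i> * 0 - complex_of_real m * snd (\<Phi> j x)))"
    by (rule Dmax_rel_of_H1_deriv)
  moreover have "(\<lambda>j x. (- \<i> * 0 + complex_of_real m * fst (\<Phi> j x), - \<i> * 0 - complex_of_real m * snd (\<Phi> j x)))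
      = (\<lambda>j x. (0, 0) + psc (- complex_of_real m) (\<Phi> j x))"
    by (simp add: \<Phi>_def psc_def fun_eq_iff)
  moreover have "Gamma1 G \<Phi> = (\<lambda>j. (0, 0))"
    by (simp add: Gamma1_def \<Phi>_def fun_eq_iff)
  ultimately have D0: "D0_rel G m \<Phi> (\<lambda>j x. (0, 0) + psc (- complex_of_real m) (\<Phi> j x))"
    by (simp add: D0_rel_def)
  have "lft G i \<in> closure (edge_int G i)"
    using G i by (auto simp: edge_int_def valid_graph_def)
  then have "0 < normH G \<Phi>"
    using D0 G i by (intro normH_pos_if_nonzero[of G \<Phi> i "lft G i"]) (auto simp: D0_rel_def Dmax_rel_def \<Phi>_def edges_def)
  moreover have "L2H G (\<lambda>j x. (0, 0))" "normH G (\<lambda>j x. (0, 0)) = 0"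
    by (simp_all add: L2H_def L2_on_zero normH_def)
  ultimately show ?thesis
    using D0 \<open>\<epsilon> > 0\<close> by (intro exI[of _ \<Phi>] exI[of _ "\<lambda>j x. (0, 0)"]) auto
qed

lemma D0_rel_exp_spinor:
  fixes G :: "'j mgraph"
  assumes G: "valid_graph G" and e: "e \<in> eedges G" and \<epsilon>: "\<epsilon> > 0"
  defines "f \<equiv> \<lambda>x. complex_of_real (exp (orient G e * \<epsilon> * (x - bdpt G e)))"
  defines "\<Phi> \<equiv> \<lambda>j x. if j = e then (0, f x) else (0, 0)"
    and "\<Psi> \<equiv> \<lambda>j x. if j = e then (- \<i> * (complex_of_real (orient G e * \<epsilon>) * f x), 0) else (0, 0)"
  shows "D0_rel G m \<Phi> (\<lambda>j x. \<Psi> j x + psc (- complex_of_real m) (\<Phi> j x))"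
proof -
  define k where "k j = (if j = e then (\<lambda>x. complex_of_real (orient G e * \<epsilon>) * f x) else (\<lambda>x. 0))" for j
  have "H1_deriv_on (edge_int G e) f (k e)"
    using H1_deriv_on_exp_external_edge[OF G e \<epsilon>, of 1] by (simp add: f_def k_def)
  then have "H1_deriv_on (edge_int G j) (\<lambda>x. snd (\<Phi> j x)) (k j)" for j
    by (cases "j = e") (simp_all add: \<Phi>_def k_def H1_deriv_on_zero)
  moreover have "H1_deriv_on (edge_int G j) (\<lambda>x. fst (\<Phi> j x)) (\<lambda>x. 0)" for j
    by (cases "j = e") (simp_all add: \<Phi>_def H1_deriv_on_zero)
  ultimately have "Dmax_rel G m \<Phi> (\<lambda>j x. (- \<i> * k j x + complex_of_real m * fst (\<Phi> j x),
      - \<i> * 0 - complex_of_real m * snd (\<Phi> j x)))"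
    by (intro Dmax_rel_of_H1_deriv)
  moreover have "(\<lambda>j x. (- \<i> * k j x + complex_of_real m * fst (\<Phi> j x), - \<i> * 0 - complex_of_real m * snd (\<Phi> j x)))
      = (\<lambda>j x. \<Psi> j x + psc (- complex_of_real m) (\<Phi> j x))"
    by (simp add: \<Phi>_def \<Psi>_def k_def psc_def fun_eq_iff)
  moreover have "Gamma1 G \<Phi> = (\<lambda>j. (0, 0))"
    by (simp add: Gamma1_def \<Phi>_def fun_eq_iff)
  ultimately show ?thesis
    by (simp add: D0_rel_def)
qed

lemma approx_eigenfunction_minus_m_external:
  fixes G :: "'j mgraph"
  assumes G: "valid_graph G" and e: "e \<in> eedges G" and \<epsilon>: "\<epsilon> > 0"
  shows "\<exists>\<Phi> \<Psi>. L2H G \<Psi> \<and> D0_rel G m \<Phi> (\<lambda>j x. \<Psi> j x + psc (- complex_of_real m) (\<Phi> j x)) \<and>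
      normH G \<Psi> \<le> \<epsilon> * normH G \<Phi> \<and> 0 < normH G \<Phi>"
proof -
  define f where "f = (\<lambda>x. complex_of_real (exp (orient G e * \<epsilon> * (x - bdpt G e))))"
  define \<Phi> :: "'j \<Rightarrow> real \<Rightarrow> complex \<times> complex" where "\<Phi> = (\<lambda>j x. if j = e then (0, f x) else (0, 0))"
  define \<Psi> :: "'j \<Rightarrow> real \<Rightarrow> complex \<times> complex"
    where "\<Psi> = (\<lambda>j x. if j = e then (- \<i> * (complex_of_real (orient G e * \<epsilon>) * f x), 0) else (0, 0))"
  have D0: "D0_rel G m \<Phi> (\<lambda>j x. \<Psi> j x + psc (- complex_of_real m) (\<Phi> j x))"
    unfolding \<Phi>_def \<Psi>_def f_def using G e \<epsilon> by (rule D0_rel_exp_spinor)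
  then have \<Phi>: "L2H G \<Phi>" and "L2H G (\<lambda>j x. \<Psi> j x + psc (- complex_of_real m) (\<Phi> j x))"
    unfolding D0_rel_def by (blast intro: L2H_if_Dmax_rel elim: Dmax_relE)+
  then have "L2H G (\<lambda>j x. psc 1 (\<Psi> j x + psc (- complex_of_real m) (\<Phi> j x)) + psc (complex_of_real m) (\<Phi> j x))"
    by (intro L2H_lincomb)
  moreover have "(\<lambda>j x. psc 1 (\<Psi> j x + psc (- complex_of_real m) (\<Phi> j x)) + psc (complex_of_real m) (\<Phi> j x)) = \<Psi>"
    by (simp add: fun_eq_iff prod_eq_iff psc_def)
  ultimately have \<Psi>: "L2H G \<Psi>"
    by simp
  have "normH G \<Psi> \<le> \<epsilon> * normH G \<Phi>"
  proof (rule normH_le_if_pointwise_le[OF \<Phi> \<Psi>])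
    fix j x
    have "\<bar>orient G e\<bar> = 1"
      using G e by (auto simp: valid_graph_def)
    then show "(cmod (fst (\<Psi> j x)))\<^sup>2 + (cmod (snd (\<Psi> j x)))\<^sup>2 \<le> \<epsilon>\<^sup>2 * ((cmod (fst (\<Phi> j x)))\<^sup>2 + (cmod (snd (\<Phi> j x)))\<^sup>2)"
      using \<epsilon> by (simp add: \<Psi>_def \<Phi>_def norm_mult power_mult_distrib abs_mult)
  qed (use \<epsilon> in simp)
  moreover have "0 < normH G \<Phi>"
  proof (rule normH_pos_if_nonzero[of G \<Phi> e "bdpt G e"])
    show "H1 G \<Phi>"
      using D0 by (simp add: D0_rel_def Dmax_rel_def)
    show "bdpt G e \<in> closure (edge_int G e)"
      using G e by (auto simp: edge_int_def valid_graph_def bdpt_def)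
  qed (use G e in \<open>auto simp: \<Phi>_def f_def edges_def\<close>)
  ultimately show ?thesis
    using \<Psi> D0 by blast
qed

lemma minus_m_notin_resolvent_D0:
  assumes G: "valid_graph G"
  shows "- complex_of_real m \<notin> resolvent_D0 G m"
proof (rule notin_resolvent_D0_if_approx_eigenfunctions)
  obtain j where "j \<in> edges G"
    using G by (auto simp: valid_graph_def edges_def)
  fix \<epsilon> :: real assume "\<epsilon> > 0"
  show "\<exists>\<Phi> \<Psi>. L2H G \<Psi> \<and> D0_rel G m \<Phi> (\<lambda>j x. \<Psi> j x + psc (- complex_of_real m) (\<Phi> j x)) \<and>
      normH G \<Psi> \<le> \<epsilon> * normH G \<Phi> \<and> 0 < normH G \<Phi>"
  proof (cases "j \<in> iedges G")
    case True
    then show ?thesis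
      using approx_eigenfunction_minus_m_internal[OF G _ \<open>\<epsilon> > 0\<close>] by blast
  next
    case False
    with \<open>j \<in> edges G\<close> have "j \<in> eedges G"
      by (simp add: edges_def)
    then show ?thesis
      using approx_eigenfunction_minus_m_external[OF G _ \<open>\<epsilon> > 0\<close>] by blast
  qed
qed

lemma resolvent_D0_reflect:
  assumes "valid_graph G" "z \<in> resolvent_D0 G m" "z \<noteq> complex_of_real m"
  shows "- cnj z \<in> resolvent_D0 G m"
proof (rule resolvent_D0_reflect_if_ne[OF assms(2,3)])
  show "z \<noteq> - complex_of_real m"
    using assms(2) minus_m_notin_resolvent_D0[OF assms(1)] by blast
qed

theorem proposition4p19:
  fixes G :: "'j mgraph" and m :: real
  assumes "valid_graph G" and "m \<ge> 0"
  shows "(\<forall>\<Phi>. H1 G \<Phi> \<longrightarrow>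
            Gamma1 G (chargeC \<Phi>) = VC G (Gamma2 G \<Phi>) \<and>
            Gamma2 G (chargeC \<Phi>) = VC G (Gamma1 G \<Phi>)) \<and>
         (\<forall>z \<in> resolvent_D0 G m - {complex_of_real m}.
            - cnj z \<in> resolvent_D0 G m \<and>
            bij_betw (Qfun G m z) (bspace G) (bspace G) \<and>
            (\<forall>\<omega>\<in>bspace G. Qfun G m (- cnj z) \<omega> =
                 VC G (inv_into (bspace G) (Qfun G m z) (VC G \<omega>))))"
proof (intro conjI allI impI ballI)
  show "Gamma1 G (chargeC \<Phi>) = VC G (Gamma2 G \<Phi>)" "Gamma2 G (chargeC \<Phi>) = VC G (Gamma1 G \<Phi>)" for \<Phi>
    using Gamma1_chargeC[OF assms(1)] Gamma2_chargeC by blast+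
next
  fix z assume "z \<in> resolvent_D0 G m - {complex_of_real m}"
  then have z: "z \<in> resolvent_D0 G m" and w: "- cnj z \<in> resolvent_D0 G m"
    using resolvent_D0_reflect[OF assms(1)] by auto
  have maps: "Qfun G m z ` bspace G \<subseteq> bspace G" "Qfun G m (- cnj z) ` bspace G \<subseteq> bspace G"
    "VC G ` bspace G \<subseteq> bspace G"
    using Qfun_in_bspace[OF assms(1) z] Qfun_in_bspace[OF assms(1) w] VC_in_bspace[OF assms(1)] by blast+
  have inverses: "Qfun G m (- cnj z) (VC G (Qfun G m z \<omega>)) = VC G \<omega>"
    "Qfun G m z (VC G (Qfun G m (- cnj z) \<omega>)) = VC G \<omega>" if "\<omega> \<in> bspace G" for \<omega>
    using Qfun_VC_Qfun[OF assms(1) z w that] Qfun_VC_Qfun[OF assms(1) w _ that] z by simp_all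
  show "- cnj z \<in> resolvent_D0 G m"
    using w .
  show "bij_betw (Qfun G m z) (bspace G) (bspace G)"
    by (rule bij_betw_with_conjugate_inverse(1)[OF maps]) (use VC_VC[OF assms(1)] inverses in auto)
  show "Qfun G m (- cnj z) \<omega> = VC G (inv_into (bspace G) (Qfun G m z) (VC G \<omega>))" if "\<omega> \<in> bspace G" for \<omega>
    by (rule bij_betw_with_conjugate_inverse(2)[OF maps _ _ _ that]) (use VC_VC[OF assms(1)] inverses in auto)
qed

end
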